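(* Let $n\geqslant 2$ and let $\alpha\colon\mathbb{N}^n\to\mathbb{N}^n$ be an isometry of $\mathbb{N}^n$ onto itself such that $(\mathbf{2}_i)\alpha=\mathbf{2}_i$ for all $i=1,\ldots,n$. Then $\alpha$ is the identity map of $\mathbb{N}^n$.
   Context: $\mathbb{N}=\{1,2,3,\ldots\}$ and $\mathbb{N}^n$ carries the Euclidean metric. Maps are written on the right. For $i\in\{1,\ldots,n\}$, $\mathbf{2}_i$ is the point of $\mathbb{N}^n$ whose $i$-th coordinate is $2$ and all other coordinates equal $1$. *)

theory Defs
  imports "HOL-Analysis.Analysis"
begin

text \<open>Points of N^n (N = {1,2,3,...}) are represented as functions nat => nat
  whose coordinates are indexed by 1..n, each coordinate at least 1,
  and which vanish outside {1..n} (so each point has a unique representation).\<close>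

definition Npts :: "nat \<Rightarrow> (nat \<Rightarrow> nat) set" where
  "Npts n = {x. (\<forall>i\<in>{1..n}. 1 \<le> x i) \<and> (\<forall>i. i \<notin> {1..n} \<longrightarrow> x i = 0)}"

definition edist :: "nat \<Rightarrow> (nat \<Rightarrow> nat) \<Rightarrow> (nat \<Rightarrow> nat) \<Rightarrow> real" where
  "edist n x y = sqrt (\<Sum>i\<in>{1..n}. (real (x i) - real (y i))^2)"

definition two_pt :: "nat \<Rightarrow> nat \<Rightarrow> (nat \<Rightarrow> nat)" where
  "two_pt n i = (\<lambda>j. if j \<in> {1..n} then (if j = i then 2 else 1) else 0)"

definition isometry_onto :: "nat \<Rightarrow> ((nat \<Rightarrow> nat) \<Rightarrow> (nat \<Rightarrow> nat)) \<Rightarrow> bool" where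
  "isometry_onto n a \<longleftrightarrow> a ` Npts n = Npts n \<and>
     (\<forall>x\<in>Npts n. \<forall>y\<in>Npts n. edist n (a x) (a y) = edist n x y)"

end

theory Submission
  imports Defs
begin

text \<open>An isometry of \<open>\<nat>\<^sup>n\<close> fixing every \<open>\<^bold>2\<^sub>i\<close> also fixes the point \<open>\<^bold>1 = (1,\<dots>,1)\<close>:
  if \<open>p\<close> is the image of \<open>\<^bold>1\<close>, then \<open>p + e\<^sub>1\<close> lies in \<open>\<nat>\<^sup>n\<close> at distance 1 from \<open>p\<close>, so
  its preimage is a point at distance 1 from \<open>\<^bold>1\<close>, i.e. some \<open>\<^bold>2\<^sub>i\<close>. Hence \<open>p + e\<^sub>1 = \<^bold>2\<^sub>i\<close>,
  which forces \<open>i = 1\<close> and \<open>p = \<^bold>1\<close>. Finally, the difference of the squared distances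
  from \<open>x\<close> to \<open>\<^bold>1\<close> and to \<open>\<^bold>2\<^sub>i\<close> is \<open>2 x\<^sub>i - 3\<close>, so these distances determine \<open>x\<close>.\<close>

definition one_pt :: "nat \<Rightarrow> nat \<Rightarrow> nat" where
  "one_pt n = (\<lambda>j. if j \<in> {1..n} then 1 else 0)"

definition sqdist :: "nat \<Rightarrow> (nat \<Rightarrow> nat) \<Rightarrow> (nat \<Rightarrow> nat) \<Rightarrow> real" where
  "sqdist n x y = (\<Sum>j\<in>{1..n}. (real (x j) - real (y j))\<^sup>2)"

lemma one_pt_in_Npts: "one_pt n \<in> Npts n"
  by (auto simp: one_pt_def Npts_def)

lemma two_pt_in_Npts: "two_pt n i \<in> Npts n"
  by (auto simp: two_pt_def Npts_def)

lemma Npts_eqI: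
  assumes "x \<in> Npts n" "y \<in> Npts n" "\<And>j. j \<in> {1..n} \<Longrightarrow> x j = y j"
  shows "x = y"
proof
  fix j show "x j = y j"
    using assms unfolding Npts_def by (cases "j \<in> {1..n}") auto
qed

lemma edist_eq_iff_sqdist_eq: "edist n x y = edist n u v \<longleftrightarrow> sqdist n x y = sqdist n u v"
  by (simp add: edist_def sqdist_def)

lemma sqdist_split:
  assumes "k \<in> {1..n}"
  shows "sqdist n x y = (real (x k) - real (y k))\<^sup>2 + (\<Sum>j\<in>{1..n} - {k}. (real (x j) - real (y j))\<^sup>2)"
  unfolding sqdist_def using assms by (simp add: sum.remove)

lemma sqdist_shift:
  assumes "k \<in> {1..n}"
  shows "sqdist n (p(k := Suc (p k))) p = 1"
  using assms by (simp add: sqdist_split[OF assms])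

lemma sqdist_one_pt_minus_sqdist_two_pt:
  assumes i: "i \<in> {1..n}"
  shows "sqdist n y (one_pt n) - sqdist n y (two_pt n i) = 2 * real (y i) - 3"
proof -
  have "(\<Sum>j\<in>{1..n} - {i}. (real (y j) - real (one_pt n j))\<^sup>2)
      = (\<Sum>j\<in>{1..n} - {i}. (real (y j) - real (two_pt n i j))\<^sup>2)"
    by (rule sum.cong) (auto simp: one_pt_def two_pt_def)
  then show ?thesis
    using i by (simp add: sqdist_split[OF i] one_pt_def two_pt_def power2_eq_square algebra_simps)
qed

lemma Npts_eq_by_sqdists:
  assumes "x \<in> Npts n" "y \<in> Npts n"
    and "sqdist n x (one_pt n) = sqdist n y (one_pt n)"
    and "\<And>i. i \<in> {1..n} \<Longrightarrow> sqdist n x (two_pt n i) = sqdist n y (two_pt n i)"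
  shows "x = y"
proof (rule Npts_eqI[OF assms(1,2)])
  fix j assume j: "j \<in> {1..n}"
  show "x j = y j"
    using sqdist_one_pt_minus_sqdist_two_pt[OF j, of x] sqdist_one_pt_minus_sqdist_two_pt[OF j, of y]
      assms(3) assms(4)[OF j] by simp
qed

lemma sqdist_one_pt_eq_1:
  assumes z: "z \<in> Npts n" and d: "sqdist n z (one_pt n) = 1"
  shows "\<exists>i\<in>{1..n}. z = two_pt n i"
proof -
  have ge1: "\<And>j. j \<in> {1..n} \<Longrightarrow> 1 \<le> z j" using z unfolding Npts_def by blast
  have "\<exists>i\<in>{1..n}. z i \<noteq> 1"
  proof (rule ccontr)
    assume "\<not> ?thesis"
    then have "z = one_pt n"
      by (intro Npts_eqI[OF z one_pt_in_Npts]) (auto simp: one_pt_def)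
    with d show False by (simp add: sqdist_def)
  qed
  then obtain i where i: "i \<in> {1..n}" "z i \<noteq> 1" by blast
  define rest where "rest = (\<Sum>j\<in>{1..n} - {i}. (real (z j) - real (one_pt n j))\<^sup>2)"
  have zi_ge: "1 \<le> real (z i) - 1" using ge1[OF i(1)] i(2) by simp
  then have "1 \<le> (real (z i) - 1)\<^sup>2" by (rule one_le_power)
  moreover have "0 \<le> rest" unfolding rest_def by (rule sum_nonneg) simp
  moreover have "(real (z i) - 1)\<^sup>2 + rest = 1"
    using d i(1) by (simp add: sqdist_split[OF i(1)] rest_def one_pt_def)
  ultimately have zi: "(real (z i) - 1)\<^sup>2 = 1" and "rest = 0" by linarith+
  then have "\<forall>j\<in>{1..n} - {i}. z j = 1"
    unfolding rest_def by (subst (asm) sum_nonneg_eq_0_iff) (auto simp: one_pt_def)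
  moreover have "real (z i) - 1 = 1" using zi zi_ge by (auto simp: power2_eq_1_iff)
  then have "z i = 2" by simp
  ultimately have "z = two_pt n i"
    using i(1) by (intro Npts_eqI[OF z two_pt_in_Npts]) (auto simp: two_pt_def)
  with i(1) show ?thesis by blast
qed

lemma isometry_onto_sqdist:
  assumes "isometry_onto n a" "x \<in> Npts n" "y \<in> Npts n"
  shows "sqdist n (a x) (a y) = sqdist n x y"
  using assms unfolding isometry_onto_def by (simp add: edist_eq_iff_sqdist_eq[symmetric])

lemma isometry_onto_fixes_one_pt:
  assumes n: "1 \<le> n" and iso: "isometry_onto n a"
    and fix2: "\<forall>i\<in>{1..n}. a (two_pt n i) = two_pt n i"
  shows "a (one_pt n) = one_pt n"
proof -
  have onto: "a ` Npts n = Npts n" using iso unfolding isometry_onto_def by blast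
  have n1: "1 \<in> {1..n}" using n by simp
  define p where "p = a (one_pt n)"
  define q where "q = p(1 := Suc (p 1))"
  have p: "p \<in> Npts n" using onto one_pt_in_Npts p_def by blast
  then have "q \<in> Npts n" using n1 unfolding q_def Npts_def by auto
  then obtain z where z: "z \<in> Npts n" "q = a z" using onto by (metis imageE)
  have "sqdist n z (one_pt n) = 1"
    using isometry_onto_sqdist[OF iso z(1) one_pt_in_Npts] sqdist_shift[OF n1, of p]
    by (simp add: z(2)[symmetric] p_def q_def)
  then obtain i where i: "i \<in> {1..n}" "z = two_pt n i"
    using sqdist_one_pt_eq_1[OF z(1)] by blast
  then have q2: "q = two_pt n i" using z(2) fix2 by simp
  have "2 \<le> q 1" using p n1 unfolding q_def Npts_def by auto
  then have "i = 1" using q2 n1 by (auto simp: two_pt_def split: if_splits)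
  show ?thesis
  proof (rule Npts_eqI[OF _ one_pt_in_Npts])
    show "a (one_pt n) \<in> Npts n" using p p_def by simp
    fix j assume "j \<in> {1..n}"
    then show "a (one_pt n) j = one_pt n j"
      using fun_cong[OF q2, of j] \<open>i = 1\<close>
      by (cases "j = 1") (auto simp: q_def p_def two_pt_def one_pt_def)
  qed
qed

theorem corollary3p1:
  fixes n :: nat and a :: "(nat \<Rightarrow> nat) \<Rightarrow> (nat \<Rightarrow> nat)"
  assumes "n \<ge> 2"
    and "isometry_onto n a"
    and "\<forall>i\<in>{1..n}. a (two_pt n i) = two_pt n i"
  shows "\<forall>x\<in>Npts n. a x = x"
proof
  fix x assume x: "x \<in> Npts n"
  have one: "a (one_pt n) = one_pt n"
    using assms by (intro isometry_onto_fixes_one_pt) auto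
  have "a x \<in> Npts n" using assms(2) x unfolding isometry_onto_def by blast
  then show "a x = x"
  proof (rule Npts_eq_by_sqdists[OF _ x])
    show "sqdist n (a x) (one_pt n) = sqdist n x (one_pt n)"
      using isometry_onto_sqdist[OF assms(2) x one_pt_in_Npts] one by simp
    show "sqdist n (a x) (two_pt n i) = sqdist n x (two_pt n i)" if "i \<in> {1..n}" for i
      using isometry_onto_sqdist[OF assms(2) x two_pt_in_Npts, of i] assms(3) that by simp
  qed
qed

end
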